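(* Let $\mathcal{S}$ be a finite set of points of interest, and for each history $X=(s_1,\dots,s_t)$ let $P(\cdot\mid X)$ be a probability distribution on $\mathcal{S}$. For an action (recommendation) $a\in\mathcal{S}$ and parameter $\theta\ge1$ define \[ P(s\mid X,a,\theta)=\begin{cases}P(s\mid X)^{1/\theta}, & s=a,\\ P(s\mid X)/z(\theta), & s\ne a,\end{cases}\qquad z(\theta)=\frac{\sum_{s\neq a}P(s\mid X)}{1-P(s=a\mid X)^{1/\theta}}. \] Then for all $\theta,\theta'\ge1$, all histories $X$ and all $a$, \[ \|P(\cdot\mid X,a,\theta)-P(\cdot\mid X,a,\theta')\|_1\le\frac{2}{e}|\theta-\theta'|. \] *)

theory Defs
  imports Complex_Main
begin

definition zconst :: "'s set \<Rightarrow> ('s \<Rightarrow> real) \<Rightarrow> 's \<Rightarrow> real \<Rightarrow> real" where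
  "zconst S p a \<theta> = (\<Sum>s\<in>S - {a}. p s) / (1 - p a powr (1 / \<theta>))"

definition perturbed :: "'s set \<Rightarrow> ('s \<Rightarrow> real) \<Rightarrow> 's \<Rightarrow> real \<Rightarrow> 's \<Rightarrow> real" where
  "perturbed S p a \<theta> s = (if s = a then p s powr (1 / \<theta>) else p s / zconst S p a \<theta>)"

end

theory Submission
  imports Defs
begin

text \<open>Off the recommended action the perturbed distribution is \<open>p\<close> rescaled to the total mass
  \<open>1 - p a powr (1/\<theta>)\<close>, so its \<open>\<ell>\<^sub>1\<close>-distance between \<open>\<theta>\<close> and \<open>\<theta>'\<close> is at most twice the change of
  \<open>q powr (1/\<theta>)\<close> with \<open>q = p a\<close>. Writing \<open>q powr (1/t) = exp (- c / t)\<close> with \<open>c = - ln q \<ge> 0\<close>, the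
  derivative in \<open>t\<close> is \<open>(c/t) exp (- c/t) / t \<le> 1/e\<close> for \<open>t \<ge> 1\<close>, since \<open>u exp (-u) \<le> 1/e\<close>.\<close>

lemma mult_exp_minus_le_inverse_exp_1:
  fixes u :: real
  shows "u * exp (- u) \<le> 1 / exp 1"
proof -
  have "u * exp (- u) \<le> exp (u - 1) * exp (- u)"
    using exp_ge_add_one_self[of "u - 1"] by (intro mult_right_mono) auto
  also have "\<dots> = 1 / exp 1"
    by (simp add: exp_diff exp_minus field_simps)
  finally show ?thesis .
qed

lemma powr_inverse_diff_le_lt:
  fixes q t1 t2 :: real
  assumes q: "0 < q" "q < 1" and t: "1 \<le> t1" "t1 < t2"
  shows "\<bar>q powr (1 / t1) - q powr (1 / t2)\<bar> \<le> (t2 - t1) / exp 1"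
proof -
  define c where "c = - ln q"
  have "c > 0" using q by (simp add: c_def)
  define f where "f t = exp (- c / t)" for t
  define f' where "f' t = exp (- c / t) * (c / t\<^sup>2)" for t
  have powr_eq: "q powr (1 / t) = f t" for t
    using q by (simp add: powr_def f_def c_def)
  have "DERIV f x :> f' x" if "t1 \<le> x" for x
  proof -
    have "DERIV (\<lambda>t. - c / t) x :> c / x\<^sup>2"
      using that t by (auto intro!: derivative_eq_intros simp: power2_eq_square)
    from DERIV_chain2[OF DERIV_exp this] show ?thesis
      unfolding f_def f'_def by simp
  qed
  then obtain z where z: "t1 < z" "z < t2" "f t2 - f t1 = (t2 - t1) * f' z"
    using MVT2[of t1 t2 f f'] t by auto
  have "z \<ge> 1" using z t by auto
  have "f' z = (c / z) * exp (- (c / z)) / z"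
    by (simp add: f'_def power2_eq_square)
  also have "\<dots> \<le> (c / z) * exp (- (c / z))"
    using \<open>z \<ge> 1\<close> \<open>c > 0\<close> by (simp add: divide_le_eq mult_le_cancel_left1)
  also have "\<dots> \<le> 1 / exp 1"
    by (rule mult_exp_minus_le_inverse_exp_1)
  finally have "f' z \<le> 1 / exp 1" .
  moreover have "f' z \<ge> 0"
    using \<open>c > 0\<close> \<open>z \<ge> 1\<close> by (simp add: f'_def)
  ultimately have "\<bar>(t2 - t1) * f' z\<bar> \<le> (t2 - t1) * (1 / exp 1)"
    using t by (metis abs_of_nonneg diff_ge_0_iff_ge less_eq_real_def mult_left_mono
        zero_le_mult_iff)
  then show ?thesis
    using z powr_eq by (simp add: abs_minus_commute)
qed

lemma powr_inverse_diff_le: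
  fixes q t1 t2 :: real
  assumes q: "0 \<le> q" "q \<le> 1" and t: "1 \<le> t1" "1 \<le> t2"
  shows "\<bar>q powr (1 / t1) - q powr (1 / t2)\<bar> \<le> \<bar>t1 - t2\<bar> / exp 1"
proof (cases "q = 0 \<or> q = 1")
  case False
  then have q': "0 < q" "q < 1" using q by auto
  consider "t1 < t2" | "t1 = t2" | "t2 < t1" by linarith
  then show ?thesis
  proof cases
    case 1
    then show ?thesis using powr_inverse_diff_le_lt[OF q' t(1) 1] by simp
  next
    case 3
    then show ?thesis
      using powr_inverse_diff_le_lt[OF q' t(2) 3] by (simp add: abs_minus_commute)
  qed simp
qed auto

lemma sum_div_zconst:
  "(\<Sum>s\<in>S - {a}. p s) / zconst S p a \<theta>
     = (if (\<Sum>s\<in>S - {a}. p s) = 0 then 0 else 1 - p a powr (1 / \<theta>))"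
  by (simp add: zconst_def)

lemma sum_abs_diff_perturbed_le:
  fixes p :: "'s \<Rightarrow> real"
  assumes "finite S" "a \<in> S" and nonneg: "\<And>s. s \<in> S - {a} \<Longrightarrow> p s \<ge> 0"
  shows "(\<Sum>s\<in>S. \<bar>perturbed S p a \<theta> s - perturbed S p a \<theta>' s\<bar>)
           \<le> 2 * \<bar>p a powr (1 / \<theta>) - p a powr (1 / \<theta>')\<bar>"
proof -
  define R where "R = (\<Sum>s\<in>S - {a}. p s)"
  define D where "D = \<bar>p a powr (1 / \<theta>) - p a powr (1 / \<theta>')\<bar>"
  have "R \<ge> 0" unfolding R_def using nonneg by (rule sum_nonneg)
  have "(\<Sum>s\<in>S - {a}. \<bar>perturbed S p a \<theta> s - perturbed S p a \<theta>' s\<bar>)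
      = \<bar>R / zconst S p a \<theta> - R / zconst S p a \<theta>'\<bar>"
  proof -
    have "\<bar>perturbed S p a \<theta> s - perturbed S p a \<theta>' s\<bar>
        = p s * \<bar>1 / zconst S p a \<theta> - 1 / zconst S p a \<theta>'\<bar>" if "s \<in> S - {a}" for s
      using that nonneg[OF that]
      by (simp add: perturbed_def divide_inverse abs_mult flip: right_diff_distrib)
    then have "(\<Sum>s\<in>S - {a}. \<bar>perturbed S p a \<theta> s - perturbed S p a \<theta>' s\<bar>)
        = R * \<bar>1 / zconst S p a \<theta> - 1 / zconst S p a \<theta>'\<bar>"
      unfolding R_def by (simp add: sum_distrib_right)
    also have "\<dots> = \<bar>R * (1 / zconst S p a \<theta> - 1 / zconst S p a \<theta>')\<bar>"
      using \<open>R \<ge> 0\<close> by (simp add: abs_mult)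
    finally show ?thesis
      by (simp add: right_diff_distrib)
  qed
  also have "\<dots> \<le> D"
    using sum_div_zconst[where S = S and a = a and p = p] unfolding R_def D_def
    by (simp add: abs_minus_commute)
  finally have "(\<Sum>s\<in>S - {a}. \<bar>perturbed S p a \<theta> s - perturbed S p a \<theta>' s\<bar>) \<le> D" .
  moreover have "\<bar>perturbed S p a \<theta> a - perturbed S p a \<theta>' a\<bar> = D"
    by (simp add: perturbed_def D_def)
  ultimately show ?thesis
    unfolding D_def by (simp add: sum.remove[OF assms(1,2)])
qed

theorem lemma5:
  fixes S :: "'s set" and P :: "'s list \<Rightarrow> 's \<Rightarrow> real"
    and X :: "'s list" and a :: 's and \<theta> \<theta>' :: real
  assumes "finite S"
    and "\<And>Y s. s \<in> S \<Longrightarrow> P Y s \<ge> 0"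
    and "\<And>Y. (\<Sum>s\<in>S. P Y s) = 1"
    and "a \<in> S"
    and "\<theta> \<ge> 1" and "\<theta>' \<ge> 1"
  shows "(\<Sum>s\<in>S. \<bar>perturbed S (P X) a \<theta> s - perturbed S (P X) a \<theta>' s\<bar>)
           \<le> 2 / exp 1 * \<bar>\<theta> - \<theta>'\<bar>"
proof -
  have "P X a \<le> (\<Sum>s\<in>S. P X s)"
    using assms(1,2,4) by (intro member_le_sum) auto
  then have "0 \<le> P X a" "P X a \<le> 1"
    using assms(2-4) by auto
  then have "\<bar>P X a powr (1 / \<theta>) - P X a powr (1 / \<theta>')\<bar> \<le> \<bar>\<theta> - \<theta>'\<bar> / exp 1"
    using assms(5,6) by (rule powr_inverse_diff_le)
  moreover have "(\<Sum>s\<in>S. \<bar>perturbed S (P X) a \<theta> s - perturbed S (P X) a \<theta>' s\<bar>)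
      \<le> 2 * \<bar>P X a powr (1 / \<theta>) - P X a powr (1 / \<theta>')\<bar>"
    using assms(1,2,4) by (intro sum_abs_diff_perturbed_le) auto
  ultimately show ?thesis by simp
qed

end
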